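(* Let $e:S\to A$ and $f:A\to X$ be morphisms in a weakly unital category $\mathbb{C}$. If $fe$ has trivial centralizer, then so does $f$. In particular (taking $A=X$, $f=1_X$), if $e:S\to X$ has trivial centralizer, then $X$ has trivial center.
   Context: A pointed category $\mathbb{C}$ with finite products is weakly unital if for all objects $A,B$ the morphisms $\langle 1,0\rangle:A\to A\times B$ and $\langle 0,1\rangle:B\to A\times B$ are jointly epimorphic. Morphisms $f:A\to X$ and $g:B\to X$ commute if there exists $\varphi:A\times B\to X$ with $\varphi\langle1,0\rangle=f$ and $\varphi\langle0,1\rangle=g$. The centralizer $z_f:Z_X(A,f)\to X$ of $f$ is the terminal object in the category of morphisms $g:B\to X$ commuting with $f$ (morphisms being maps over $X$); $f$ has trivial centralizer if $Z_X(A,f)=0$. The center of $X$ is the centralizer of $1_X$; $X$ has trivial center if it is $0$. *)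

theory Defs
  imports Main
begin

text \<open>A category is given by a type of objects 'o and a type of morphisms 'm
(every element of 'm is a morphism), with domain, codomain, composition
(Comp C g f = g after f, meaningful when Cod C f = Dom C g) and identities.\<close>

record ('o, 'm) cat =
  Dom  :: "'m \<Rightarrow> 'o"
  Cod  :: "'m \<Rightarrow> 'o"
  Comp :: "'m \<Rightarrow> 'm \<Rightarrow> 'm"
  Idm  :: "'o \<Rightarrow> 'm"

definition hom :: "('o, 'm) cat \<Rightarrow> 'o \<Rightarrow> 'o \<Rightarrow> 'm set" where
  "hom C A B = {f. Dom C f = A \<and> Cod C f = B}"

definition is_category :: "('o, 'm) cat \<Rightarrow> bool" where
  "is_category C \<longleftrightarrow>
     (\<forall>a. Dom C (Idm C a) = a \<and> Cod C (Idm C a) = a) \<and>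
     (\<forall>f g. Cod C f = Dom C g \<longrightarrow>
        Dom C (Comp C g f) = Dom C f \<and> Cod C (Comp C g f) = Cod C g) \<and>
     (\<forall>f. Comp C f (Idm C (Dom C f)) = f \<and> Comp C (Idm C (Cod C f)) f = f) \<and>
     (\<forall>f g h. Cod C f = Dom C g \<longrightarrow> Cod C g = Dom C h \<longrightarrow>
        Comp C h (Comp C g f) = Comp C (Comp C h g) f)"

definition is_zero_object :: "('o, 'm) cat \<Rightarrow> 'o \<Rightarrow> bool" where
  "is_zero_object C Z \<longleftrightarrow>
     (\<forall>A. \<exists>!f. f \<in> hom C A Z) \<and> (\<forall>A. \<exists>!f. f \<in> hom C Z A)"

definition is_pointed :: "('o, 'm) cat \<Rightarrow> bool" where
  "is_pointed C \<longleftrightarrow> (\<exists>Z. is_zero_object C Z)"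

definition zero_mor :: "('o, 'm) cat \<Rightarrow> 'o \<Rightarrow> 'o \<Rightarrow> 'm" where
  "zero_mor C A B =
     (let Z = (SOME Z. is_zero_object C Z)
      in Comp C (THE g. g \<in> hom C Z B) (THE f. f \<in> hom C A Z))"

definition is_product :: "('o, 'm) cat \<Rightarrow> 'o \<Rightarrow> 'o \<Rightarrow> 'o \<Rightarrow> 'm \<Rightarrow> 'm \<Rightarrow> bool" where
  "is_product C A B P p1 p2 \<longleftrightarrow>
     p1 \<in> hom C P A \<and> p2 \<in> hom C P B \<and>
     (\<forall>D f g. f \<in> hom C D A \<longrightarrow> g \<in> hom C D B \<longrightarrow>
        (\<exists>!h. h \<in> hom C D P \<and> Comp C p1 h = f \<and> Comp C p2 h = g))"

text \<open>Finite products: binary products plus a terminal object (the latter is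
provided by the zero object in a pointed category).\<close>
definition has_binary_products :: "('o, 'm) cat \<Rightarrow> bool" where
  "has_binary_products C \<longleftrightarrow> (\<forall>A B. \<exists>P p1 p2. is_product C A B P p1 p2)"

definition pairing :: "('o, 'm) cat \<Rightarrow> 'm \<Rightarrow> 'm \<Rightarrow> 'o \<Rightarrow> 'm \<Rightarrow> 'm \<Rightarrow> 'm" where
  "pairing C p1 p2 D f g = (THE h. h \<in> hom C D (Dom C p1) \<and> Comp C p1 h = f \<and> Comp C p2 h = g)"

definition jointly_epic :: "('o, 'm) cat \<Rightarrow> 'm \<Rightarrow> 'm \<Rightarrow> bool" where
  "jointly_epic C u v \<longleftrightarrow>
     (\<forall>s t. Dom C s = Cod C u \<longrightarrow> Dom C t = Cod C u \<longrightarrow> Cod C s = Cod C t \<longrightarrow>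
        Comp C s u = Comp C t u \<longrightarrow> Comp C s v = Comp C t v \<longrightarrow> s = t)"

definition weakly_unital :: "('o, 'm) cat \<Rightarrow> bool" where
  "weakly_unital C \<longleftrightarrow>
     is_category C \<and> is_pointed C \<and> has_binary_products C \<and>
     (\<forall>A B P p1 p2. is_product C A B P p1 p2 \<longrightarrow>
        jointly_epic C (pairing C p1 p2 A (Idm C A) (zero_mor C A B))
                       (pairing C p1 p2 B (zero_mor C B A) (Idm C B)))"

definition commute :: "('o, 'm) cat \<Rightarrow> 'm \<Rightarrow> 'm \<Rightarrow> bool" where
  "commute C f g \<longleftrightarrow> Cod C f = Cod C g \<and>
     (\<exists>P p1 p2 \<phi>. is_product C (Dom C f) (Dom C g) P p1 p2 \<and>
        \<phi> \<in> hom C P (Cod C f) \<and>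
        Comp C \<phi> (pairing C p1 p2 (Dom C f) (Idm C (Dom C f)) (zero_mor C (Dom C f) (Dom C g))) = f \<and>
        Comp C \<phi> (pairing C p1 p2 (Dom C g) (zero_mor C (Dom C g) (Dom C f)) (Idm C (Dom C g))) = g)"

definition is_centralizer :: "('o, 'm) cat \<Rightarrow> 'm \<Rightarrow> 'm \<Rightarrow> bool" where
  "is_centralizer C f z \<longleftrightarrow> Cod C z = Cod C f \<and> commute C f z \<and>
     (\<forall>g. Cod C g = Cod C f \<longrightarrow> commute C f g \<longrightarrow>
        (\<exists>!h. h \<in> hom C (Dom C g) (Dom C z) \<and> Comp C z h = g))"

definition has_trivial_centralizer :: "('o, 'm) cat \<Rightarrow> 'm \<Rightarrow> bool" where
  "has_trivial_centralizer C f \<longleftrightarrow>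
     (\<exists>z. is_centralizer C f z \<and> is_zero_object C (Dom C z))"

definition has_trivial_center :: "('o, 'm) cat \<Rightarrow> 'o \<Rightarrow> bool" where
  "has_trivial_center C X \<longleftrightarrow> has_trivial_centralizer C (Idm C X)"

end

theory Submission
  imports Defs
begin

text \<open>A centralizer \<open>z\<close> of \<open>f e\<close> with zero domain is a centralizer of \<open>f\<close>.
It commutes with \<open>f\<close> because a morphism out of a zero object commutes with
everything (take \<open>\<phi> = f \<pi>\<^sub>1\<close>); and it is terminal among morphisms commuting
with \<open>f\<close> because anything commuting with \<open>f\<close> commutes with \<open>f e\<close>: if
\<open>\<phi> : A \<times> B \<rightarrow> X\<close> witnesses that \<open>f\<close> and \<open>g\<close> commute, then
\<open>\<phi> (e \<times> 1\<^sub>B) : S \<times> B \<rightarrow> X\<close> witnesses that \<open>f e\<close> and \<open>g\<close> commute.\<close>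

lemma in_hom_iff: "f \<in> hom C A B \<longleftrightarrow> Dom C f = A \<and> Cod C f = B"
  by (simp add: hom_def)

lemma zero_object_hom_to: "is_zero_object C Z \<Longrightarrow> \<exists>!f. f \<in> hom C A Z"
  unfolding is_zero_object_def by (elim conjE) (erule spec)

lemma zero_object_hom_from: "is_zero_object C Z \<Longrightarrow> \<exists>!f. f \<in> hom C Z A"
  unfolding is_zero_object_def by (elim conjE) (erule spec)

lemma zero_object_hom_from_unique:
  assumes "is_zero_object C Z" "f \<in> hom C Z A" "g \<in> hom C Z A"
  shows "f = g"
  using zero_object_hom_from [OF assms(1)] assms(2,3) by blast

lemma product_projections:
  "is_product C A B P p1 p2 \<Longrightarrow> p1 \<in> hom C P A \<and> p2 \<in> hom C P B"
  by (simp add: is_product_def)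

lemma pairing_spec:
  assumes "is_product C A B P p1 p2" "f \<in> hom C D A" "g \<in> hom C D B"
  shows "pairing C p1 p2 D f g \<in> hom C D P \<and>
    Comp C p1 (pairing C p1 p2 D f g) = f \<and> Comp C p2 (pairing C p1 p2 D f g) = g"
proof -
  have ex: "\<exists>!h. h \<in> hom C D P \<and> Comp C p1 h = f \<and> Comp C p2 h = g"
    using assms unfolding is_product_def by blast
  have "Dom C p1 = P"
    using product_projections [OF assms(1)] by (simp add: in_hom_iff)
  then show ?thesis
    unfolding pairing_def by (rule ssubst) (rule theI' [OF ex])
qed

lemma pairing_unique:
  assumes "is_product C A B P p1 p2" "f \<in> hom C D A" "g \<in> hom C D B"
    and "h \<in> hom C D P" "Comp C p1 h = f" "Comp C p2 h = g"
  shows "pairing C p1 p2 D f g = h"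
proof -
  have "\<exists>!k. k \<in> hom C D P \<and> Comp C p1 k = f \<and> Comp C p2 k = g"
    using assms(1-3) unfolding is_product_def by blast
  moreover have "Dom C p1 = P"
    using product_projections [OF assms(1)] by (simp add: in_hom_iff)
  ultimately show ?thesis
    unfolding pairing_def using assms(4-6) by (simp add: the1_equality)
qed

locale pointed_category =
  fixes C :: "('o, 'm) cat"
  assumes category: "is_category C"
    and pointed: "is_pointed C"
begin

abbreviation comp (infixr "\<cdot>" 55) where "g \<cdot> f \<equiv> Comp C g f"

lemma comp_in_hom [intro]: "f \<in> hom C A B \<Longrightarrow> g \<in> hom C B D \<Longrightarrow> g \<cdot> f \<in> hom C A D"
  using category unfolding is_category_def in_hom_iff by simp

lemma comp_assoc:
  "f \<in> hom C A B \<Longrightarrow> g \<in> hom C B D \<Longrightarrow> h \<in> hom C D E \<Longrightarrow> h \<cdot> g \<cdot> f = (h \<cdot> g) \<cdot> f"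
  using category unfolding is_category_def in_hom_iff by simp

lemma id_in_hom [intro]: "Idm C A \<in> hom C A A"
  using category unfolding is_category_def in_hom_iff by simp

lemma comp_id_left [simp]: "f \<in> hom C A B \<Longrightarrow> Idm C B \<cdot> f = f"
  using category unfolding is_category_def in_hom_iff by auto

lemma comp_id_right [simp]: "f \<in> hom C A B \<Longrightarrow> f \<cdot> Idm C A = f"
  using category unfolding is_category_def in_hom_iff by auto

abbreviation zero_obj where "zero_obj \<equiv> SOME Z. is_zero_object C Z"

lemma is_zero_object_zero_obj: "is_zero_object C zero_obj"
  using pointed unfolding is_pointed_def by (rule someI_ex)

lemma zero_mor_eq:
  assumes "t \<in> hom C A zero_obj" "u \<in> hom C zero_obj B"
  shows "zero_mor C A B = u \<cdot> t"
proof -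
  have "(THE t. t \<in> hom C A zero_obj) = t"
    using zero_object_hom_to [OF is_zero_object_zero_obj] assms(1) by (rule the1_equality)
  moreover have "(THE u. u \<in> hom C zero_obj B) = u"
    using zero_object_hom_from [OF is_zero_object_zero_obj] assms(2) by (rule the1_equality)
  ultimately
  show ?thesis
    unfolding zero_mor_def Let_def by simp
qed

lemma zero_mor_factors:
  obtains t u where "t \<in> hom C A zero_obj" "u \<in> hom C zero_obj B" "zero_mor C A B = u \<cdot> t"
proof -
  from ex1_implies_ex [OF zero_object_hom_to [OF is_zero_object_zero_obj]]
  obtain t where t: "t \<in> hom C A zero_obj" ..
  from ex1_implies_ex [OF zero_object_hom_from [OF is_zero_object_zero_obj]]
  obtain u where u: "u \<in> hom C zero_obj B" ..
  show ?thesis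
    by (rule that [OF t u zero_mor_eq [OF t u]])
qed

lemma zero_mor_in_hom [intro]: "zero_mor C A B \<in> hom C A B"
proof -
  obtain t u where t: "t \<in> hom C A zero_obj" and u: "u \<in> hom C zero_obj B"
    and "zero_mor C A B = u \<cdot> t"
    by (rule zero_mor_factors)
  with comp_in_hom [OF t u] show ?thesis by simp
qed

lemma zero_mor_comp [simp]:
  assumes "e \<in> hom C S A"
  shows "zero_mor C A B \<cdot> e = zero_mor C S B"
proof -
  obtain t u where t: "t \<in> hom C A zero_obj" and u: "u \<in> hom C zero_obj B"
    and "zero_mor C A B = u \<cdot> t"
    by (rule zero_mor_factors)
  then have "zero_mor C A B \<cdot> e = u \<cdot> t \<cdot> e"
    using assms by (simp add: comp_assoc)
  also have "\<dots> = zero_mor C S B"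
    by (rule zero_mor_eq [OF comp_in_hom [OF assms t] u, symmetric])
  finally show ?thesis .
qed

lemma comp_zero_mor [simp]:
  assumes "e \<in> hom C B D"
  shows "e \<cdot> zero_mor C A B = zero_mor C A D"
proof -
  obtain t u where t: "t \<in> hom C A zero_obj" and u: "u \<in> hom C zero_obj B"
    and "zero_mor C A B = u \<cdot> t"
    by (rule zero_mor_factors)
  then have "e \<cdot> zero_mor C A B = (e \<cdot> u) \<cdot> t"
    using assms by (simp add: comp_assoc)
  also have "\<dots> = zero_mor C A D"
    by (rule zero_mor_eq [OF t comp_in_hom [OF u assms], symmetric])
  finally show ?thesis .
qed

lemma pairing_comp:
  assumes P: "is_product C A B P p1 p2" and "f \<in> hom C D A" "g \<in> hom C D B" "h \<in> hom C D' D"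
  shows "pairing C p1 p2 D f g \<cdot> h = pairing C p1 p2 D' (f \<cdot> h) (g \<cdot> h)"
proof -
  let ?k = "pairing C p1 p2 D f g"
  have k: "?k \<in> hom C D P" "p1 \<cdot> ?k = f" "p2 \<cdot> ?k = g"
    using pairing_spec [OF assms(1-3)] by auto
  have "p1 \<cdot> ?k \<cdot> h = f \<cdot> h" "p2 \<cdot> ?k \<cdot> h = g \<cdot> h"
    using comp_assoc [OF assms(4) k(1)] product_projections [OF P] k(2,3) by auto
  with assms k(1) have "pairing C p1 p2 D' (f \<cdot> h) (g \<cdot> h) = ?k \<cdot> h"
    by (intro pairing_unique [OF P] comp_in_hom)
  then show ?thesis ..
qed

abbreviation incl1 where "incl1 p1 p2 A B \<equiv> pairing C p1 p2 A (Idm C A) (zero_mor C A B)"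

abbreviation incl2 where "incl2 p1 p2 A B \<equiv> pairing C p1 p2 B (zero_mor C B A) (Idm C B)"

lemma incl1_spec:
  "is_product C A B P p1 p2 \<Longrightarrow>
    incl1 p1 p2 A B \<in> hom C A P \<and> p1 \<cdot> incl1 p1 p2 A B = Idm C A \<and>
    p2 \<cdot> incl1 p1 p2 A B = zero_mor C A B"
  by (rule pairing_spec) auto

lemma incl2_spec:
  "is_product C A B P p1 p2 \<Longrightarrow>
    incl2 p1 p2 A B \<in> hom C B P \<and> p1 \<cdot> incl2 p1 p2 A B = zero_mor C B A \<and>
    p2 \<cdot> incl2 p1 p2 A B = Idm C B"
  by (rule pairing_spec) auto

lemma incl1_natural:
  assumes P: "is_product C A B P p1 p2" and Q: "is_product C S B Q q1 q2" and e: "e \<in> hom C S A"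
  shows "pairing C p1 p2 Q (e \<cdot> q1) q2 \<cdot> incl1 q1 q2 S B = incl1 p1 p2 A B \<cdot> e"
proof -
  note q = product_projections [OF Q] and i = incl1_spec [OF Q]
  have "pairing C p1 p2 Q (e \<cdot> q1) q2 \<cdot> incl1 q1 q2 S B
      = pairing C p1 p2 S ((e \<cdot> q1) \<cdot> incl1 q1 q2 S B) (q2 \<cdot> incl1 q1 q2 S B)"
    using q i e by (intro pairing_comp [OF P] comp_in_hom) auto
  also have "\<dots> = pairing C p1 p2 S (Idm C A \<cdot> e) (zero_mor C A B \<cdot> e)"
    using q i e comp_assoc [of "incl1 q1 q2 S B" S Q q1 S e A] by simp
  also have "\<dots> = incl1 p1 p2 A B \<cdot> e"
    using e by (intro pairing_comp [OF P, symmetric]) auto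
  finally show ?thesis .
qed

lemma incl2_natural:
  assumes P: "is_product C A B P p1 p2" and Q: "is_product C S B Q q1 q2" and e: "e \<in> hom C S A"
  shows "pairing C p1 p2 Q (e \<cdot> q1) q2 \<cdot> incl2 q1 q2 S B = incl2 p1 p2 A B"
proof -
  note q = product_projections [OF Q] and i = incl2_spec [OF Q]
  have "pairing C p1 p2 Q (e \<cdot> q1) q2 \<cdot> incl2 q1 q2 S B
      = pairing C p1 p2 B ((e \<cdot> q1) \<cdot> incl2 q1 q2 S B) (q2 \<cdot> incl2 q1 q2 S B)"
    using q i e by (intro pairing_comp [OF P] comp_in_hom) auto
  also have "\<dots> = incl2 p1 p2 A B"
    using q i e comp_assoc [of "incl2 q1 q2 S B" B Q q1 S e A] by simp
  finally show ?thesis .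
qed

lemma commuteI:
  assumes P: "is_product C A B P p1 p2" and \<phi>: "\<phi> \<in> hom C P X"
  shows "commute C (\<phi> \<cdot> incl1 p1 p2 A B) (\<phi> \<cdot> incl2 p1 p2 A B)"
proof -
  have "\<phi> \<cdot> incl1 p1 p2 A B \<in> hom C A X" "\<phi> \<cdot> incl2 p1 p2 A B \<in> hom C B X"
    using incl1_spec [OF P] incl2_spec [OF P] \<phi> by auto
  then have "Dom C (\<phi> \<cdot> incl1 p1 p2 A B) = A" "Dom C (\<phi> \<cdot> incl2 p1 p2 A B) = B"
    and "Cod C (\<phi> \<cdot> incl1 p1 p2 A B) = X" "Cod C (\<phi> \<cdot> incl2 p1 p2 A B) = X"
    by (simp_all add: in_hom_iff)
  with P \<phi> show ?thesis
    unfolding commute_def by auto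
qed

lemma commuteE:
  assumes "commute C f g" and "f \<in> hom C A X"
  obtains P p1 p2 \<phi> where "is_product C A (Dom C g) P p1 p2" and "\<phi> \<in> hom C P X"
    and "\<phi> \<cdot> incl1 p1 p2 A (Dom C g) = f" and "\<phi> \<cdot> incl2 p1 p2 A (Dom C g) = g"
  using assms unfolding commute_def in_hom_iff by auto

lemma commute_zero_object:
  assumes products: "has_binary_products C" and Z: "is_zero_object C Z"
    and f: "f \<in> hom C A X" and z: "z \<in> hom C Z X"
  shows "commute C f z"
proof -
  obtain P p1 p2 where P: "is_product C A Z P p1 p2"
    using products unfolding has_binary_products_def by blast
  note p = product_projections [OF P] and i1 = incl1_spec [OF P] and i2 = incl2_spec [OF P]
  have "(f \<cdot> p1) \<cdot> incl1 p1 p2 A Z = f"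
    using comp_assoc [of "incl1 p1 p2 A Z" A P p1 A f X] p i1 f by simp
  moreover have "(f \<cdot> p1) \<cdot> incl2 p1 p2 A Z = z"
    using p i2 f z by (intro zero_object_hom_from_unique [OF Z] comp_in_hom) auto
  moreover have "commute C ((f \<cdot> p1) \<cdot> incl1 p1 p2 A Z) ((f \<cdot> p1) \<cdot> incl2 p1 p2 A Z)"
    using p f by (intro commuteI [OF P] comp_in_hom) auto
  ultimately show ?thesis
    by simp
qed

lemma commute_comp_right:
  assumes products: "has_binary_products C" and e: "e \<in> hom C S A" and f: "f \<in> hom C A X"
    and "commute C f g"
  shows "commute C (f \<cdot> e) g"
proof -
  obtain P p1 p2 \<phi> where P: "is_product C A (Dom C g) P p1 p2" and \<phi>: "\<phi> \<in> hom C P X"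
    and f_eq: "\<phi> \<cdot> incl1 p1 p2 A (Dom C g) = f" and g_eq: "\<phi> \<cdot> incl2 p1 p2 A (Dom C g) = g"
    using \<open>commute C f g\<close> f by (rule commuteE)
  obtain Q q1 q2 where Q: "is_product C S (Dom C g) Q q1 q2"
    using products unfolding has_binary_products_def by blast
  note p = product_projections [OF P] and q = product_projections [OF Q]
  define m where "m = pairing C p1 p2 Q (e \<cdot> q1) q2"
  have m: "m \<in> hom C Q P"
    unfolding m_def using e q by (intro conjunct1 [OF pairing_spec [OF P]] comp_in_hom) auto
  have i1: "incl1 q1 q2 S (Dom C g) \<in> hom C S Q" and i2: "incl2 q1 q2 S (Dom C g) \<in> hom C (Dom C g) Q"
    using incl1_spec [OF Q] incl2_spec [OF Q] by auto
  have "(\<phi> \<cdot> m) \<cdot> incl1 q1 q2 S (Dom C g) = \<phi> \<cdot> incl1 p1 p2 A (Dom C g) \<cdot> e"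
    using comp_assoc [OF i1 m \<phi>] incl1_natural [OF P Q e] unfolding m_def by simp
  also have "\<dots> = f \<cdot> e"
    using comp_assoc [OF e conjunct1 [OF incl1_spec [OF P]] \<phi>] f_eq by simp
  finally have "(\<phi> \<cdot> m) \<cdot> incl1 q1 q2 S (Dom C g) = f \<cdot> e" .
  moreover have "(\<phi> \<cdot> m) \<cdot> incl2 q1 q2 S (Dom C g) = g"
    using comp_assoc [OF i2 m \<phi>] incl2_natural [OF P Q e] g_eq unfolding m_def by simp
  moreover have "commute C ((\<phi> \<cdot> m) \<cdot> incl1 q1 q2 S (Dom C g)) ((\<phi> \<cdot> m) \<cdot> incl2 q1 q2 S (Dom C g))"
    using m \<phi> by (intro commuteI [OF Q] comp_in_hom)
  ultimately show ?thesis
    by simp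
qed

lemma is_centralizer_comp_right:
  assumes products: "has_binary_products C" and "Cod C e = Dom C f"
    and z: "is_centralizer C (f \<cdot> e) z" and "commute C f z"
  shows "is_centralizer C f z"
proof -
  have e: "e \<in> hom C (Dom C e) (Dom C f)" and f: "f \<in> hom C (Dom C f) (Cod C f)"
    using \<open>Cod C e = Dom C f\<close> by (simp_all add: in_hom_iff)
  have cod: "Cod C (f \<cdot> e) = Cod C f"
    using comp_in_hom [OF e f] by (simp add: in_hom_iff)
  have "\<exists>!h. h \<in> hom C (Dom C g) (Dom C z) \<and> z \<cdot> h = g"
    if "Cod C g = Cod C f" and "commute C f g" for g
    using z commute_comp_right [OF products e f \<open>commute C f g\<close>] \<open>Cod C g = Cod C f\<close> cod
    unfolding is_centralizer_def by simp
  with z cod \<open>commute C f z\<close> show ?thesis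
    unfolding is_centralizer_def by simp
qed

lemma has_trivial_centralizer_comp_right:
  assumes products: "has_binary_products C" and "Cod C e = Dom C f"
    and "has_trivial_centralizer C (f \<cdot> e)"
  shows "has_trivial_centralizer C f"
proof -
  obtain z where z: "is_centralizer C (f \<cdot> e) z" and Z: "is_zero_object C (Dom C z)"
    using \<open>has_trivial_centralizer C (f \<cdot> e)\<close> unfolding has_trivial_centralizer_def by blast
  have "Cod C z = Cod C f"
    using z \<open>Cod C e = Dom C f\<close> category unfolding is_centralizer_def is_category_def by simp
  then have "commute C f z"
    by (intro commute_zero_object [OF products Z]) (simp_all add: in_hom_iff)
  with is_centralizer_comp_right [OF products \<open>Cod C e = Dom C f\<close> z] Z show ?thesis
    unfolding has_trivial_centralizer_def by blast
qed

end

theorem proposition3p2: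
  fixes C :: "('o, 'm) cat"
  assumes "weakly_unital C"
  shows "(\<forall>e f. Cod C e = Dom C f \<longrightarrow>
            has_trivial_centralizer C (Comp C f e) \<longrightarrow> has_trivial_centralizer C f)
       \<and> (\<forall>e. has_trivial_centralizer C e \<longrightarrow> has_trivial_center C (Cod C e))"
proof -
  interpret pointed_category C
    using assms unfolding weakly_unital_def by unfold_locales simp_all
  have products: "has_binary_products C"
    using assms unfolding weakly_unital_def by simp
  have "Idm C (Cod C e) \<cdot> e = e" "Cod C e = Dom C (Idm C (Cod C e))" for e
    using comp_id_left [of e] id_in_hom [of "Cod C e"] by (simp_all add: in_hom_iff)
  then show ?thesis
    using has_trivial_centralizer_comp_right [OF products]
    unfolding has_trivial_center_def by metis
qed

end
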